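(* Let $G$ be the 2-blowup of $F_3$. Then $\chi(G)=7$.
   Context: $F_3$ is the graph on $\{v_1,\dots,v_6,x,y,z\}$ where $v_1\cdots v_6v_1$ is an induced 6-cycle, $x$ is adjacent to $v_1,v_2,v_3$, $y$ to $v_3,v_4,v_5$, $z$ to $v_5,v_6,v_1$, $\{x,y,z\}$ is a triangle, and there are no other edges. The 2-blowup of $H$ is obtained by replacing each vertex $v$ of $H$ by a clique $Q_v$ of size 2, with $Q_u$ complete to $Q_v$ if $uv\in E(H)$ and no edges between $Q_u,Q_v$ otherwise. *)

theory Defs
  imports Main
begin

text \<open>Simple graphs are given by a finite vertex type and a symmetric irreflexive
adjacency relation.\<close>

definition proper_colouring :: "('a \<Rightarrow> 'a \<Rightarrow> bool) \<Rightarrow> nat \<Rightarrow> ('a \<Rightarrow> nat) \<Rightarrow> bool" where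
  "proper_colouring E k c \<longleftrightarrow> (\<forall>v. c v < k) \<and> (\<forall>u v. E u v \<longrightarrow> c u \<noteq> c v)"

definition colourable :: "('a \<Rightarrow> 'a \<Rightarrow> bool) \<Rightarrow> nat \<Rightarrow> bool" where
  "colourable E k \<longleftrightarrow> (\<exists>c. proper_colouring E k c)"

definition chromatic_number :: "('a \<Rightarrow> 'a \<Rightarrow> bool) \<Rightarrow> nat" where
  "chromatic_number E = (LEAST k. colourable E k)"

datatype F3V = V1 | V2 | V3 | V4 | V5 | V6 | X | Y | Z

definition F3_edges :: "(F3V \<times> F3V) set" where
  "F3_edges = {(V1,V2),(V2,V3),(V3,V4),(V4,V5),(V5,V6),(V6,V1),
               (X,V1),(X,V2),(X,V3),
               (Y,V3),(Y,V4),(Y,V5),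
               (Z,V5),(Z,V6),(Z,V1),
               (X,Y),(Y,Z),(Z,X)}"

definition F3_adj :: "F3V \<Rightarrow> F3V \<Rightarrow> bool" where
  "F3_adj u v \<longleftrightarrow> (u, v) \<in> F3_edges \<or> (v, u) \<in> F3_edges"

text \<open>2-blowup: vertex v replaced by clique {(v,False),(v,True)}; Q_u complete to Q_v iff uv is an edge.\<close>
definition blowup2 :: "('a \<Rightarrow> 'a \<Rightarrow> bool) \<Rightarrow> ('a \<times> bool) \<Rightarrow> ('a \<times> bool) \<Rightarrow> bool" where
  "blowup2 E p q \<longleftrightarrow> (fst p = fst q \<and> snd p \<noteq> snd q) \<or> E (fst p) (fst q)"

end

theory Submission
  imports Defs
begin

text \<open>The triangle XYZ blows up to a clique of size 6, so in a 6-colouring its three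
colour pairs use all six colours. Then Q_V1, being complete to Q_X and Q_Z, must carry
exactly the colours of Q_Y, and likewise Q_V3 those of Q_Z. But Q_V2 is complete to
Q_X, Q_V1 and Q_V3 and so sees all six colours. An explicit 7-colouring gives the upper
bound.\<close>

lemma colourable_mono: "colourable E j \<Longrightarrow> j \<le> k \<Longrightarrow> colourable E k"
  unfolding colourable_def proper_colouring_def by (meson less_le_trans)

lemma chromatic_number_eqI:
  assumes "colourable E (Suc k)" and "\<not> colourable E k"
  shows "chromatic_number E = Suc k"
  unfolding chromatic_number_def
proof (rule Least_equality)
  show "Suc k \<le> j" if "colourable E j" for j
    using that assms(2) colourable_mono[of E j k] by (cases "Suc k \<le> j") auto
qed (fact assms(1))

lemma proper_colouring_image_subset: "proper_colouring E k c \<Longrightarrow> c ` A \<subseteq> {..<k}"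
  unfolding proper_colouring_def by auto

lemma blowup2_colours_card:
  assumes "proper_colouring (blowup2 E) k c"
  shows "card (c ` ({u} \<times> UNIV)) = 2"
proof -
  have "c (u, False) \<noteq> c (u, True)"
    using assms unfolding proper_colouring_def blowup2_def by (metis fst_conv snd_conv)
  moreover have "{u} \<times> (UNIV :: bool set) = {(u, False), (u, True)}"
    by (auto simp: UNIV_bool)
  ultimately show ?thesis by simp
qed

lemma blowup2_colours_disjoint:
  assumes "proper_colouring (blowup2 E) k c" and "E u v"
  shows "c ` ({u} \<times> UNIV) \<inter> c ` ({v} \<times> UNIV) = {}"
  using assms unfolding proper_colouring_def blowup2_def by fastforce

lemma blowup2_triangle_colours:
  assumes c: "proper_colouring (blowup2 E) 6 c"
    and "E u v" "E v w" "E u w"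
  shows "c ` ({u} \<times> UNIV) \<union> c ` ({v} \<times> UNIV) \<union> c ` ({w} \<times> UNIV) = {..<6}"
    (is "?U \<union> ?V \<union> ?W = _")
proof (rule card_subset_eq)
  have "?U \<inter> ?V = {}" "?V \<inter> ?W = {}" "?U \<inter> ?W = {}"
    using assms by (simp_all add: blowup2_colours_disjoint)
  then have "card (?U \<union> ?V \<union> ?W) = card ?U + card ?V + card ?W"
    by (simp add: card_Un_disjoint Int_Un_distrib2)
  then show "card (?U \<union> ?V \<union> ?W) = card {..<6::nat}"
    by (simp add: blowup2_colours_card[OF c])
  show "?U \<union> ?V \<union> ?W \<subseteq> {..<6}"
    using proper_colouring_image_subset[OF c] by (metis le_sup_iff)
qed simp

lemma blowup2_common_neighbour_colours:
  assumes c: "proper_colouring (blowup2 E) 6 c"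
    and triangle: "E u v" "E v w" "E u w"
    and "E x u" "E x w"
  shows "c ` ({x} \<times> UNIV) = c ` ({v} \<times> UNIV)"
    (is "?X = ?V")
proof (rule card_subset_eq)
  have "?X \<subseteq> c ` ({u} \<times> UNIV) \<union> ?V \<union> c ` ({w} \<times> UNIV)"
    unfolding blowup2_triangle_colours[OF c triangle]
    by (rule proper_colouring_image_subset[OF c])
  then show "?X \<subseteq> ?V"
    using blowup2_colours_disjoint[OF c \<open>E x u\<close>] blowup2_colours_disjoint[OF c \<open>E x w\<close>]
    by blast
qed (simp_all add: blowup2_colours_card[OF c])

lemma blowup2_F3_not_6_colourable: "\<not> colourable (blowup2 F3_adj) 6"
proof
  assume "colourable (blowup2 F3_adj) 6"
  then obtain c where c: "proper_colouring (blowup2 F3_adj) 6 c"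
    unfolding colourable_def by blast
  let ?C = "\<lambda>u. c ` ({u} \<times> UNIV)"
  have triangle: "F3_adj X Y" "F3_adj Y Z" "F3_adj X Z"
    by (simp_all add: F3_adj_def F3_edges_def)
  have "?C V1 = ?C Y"
    by (rule blowup2_common_neighbour_colours[OF c triangle])
       (simp_all add: F3_adj_def F3_edges_def)
  moreover have "?C V3 = ?C Z"
    by (rule blowup2_common_neighbour_colours[OF c, of Y Z X])
       (simp_all add: F3_adj_def F3_edges_def)
  moreover have "?C V2 \<inter> ?C X = {}" "?C V2 \<inter> ?C V1 = {}" "?C V2 \<inter> ?C V3 = {}"
    by (rule blowup2_colours_disjoint[OF c]; simp add: F3_adj_def F3_edges_def)+
  ultimately have "?C V2 \<inter> (?C X \<union> ?C Y \<union> ?C Z) = {}"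
    by (simp add: Int_Un_distrib)
  then have "?C V2 = {}"
    unfolding blowup2_triangle_colours[OF c triangle]
    using proper_colouring_image_subset[OF c] by (metis inf.absorb_iff1)
  then show False by simp
qed

fun F3_blowup_colouring :: "F3V \<times> bool \<Rightarrow> nat" where
  "F3_blowup_colouring (V1, b) = (if b then 1 else 0)"
| "F3_blowup_colouring (V2, b) = (if b then 3 else 2)"
| "F3_blowup_colouring (V3, b) = (if b then 4 else 0)"
| "F3_blowup_colouring (V4, b) = (if b then 5 else 2)"
| "F3_blowup_colouring (V5, b) = (if b then 6 else 0)"
| "F3_blowup_colouring (V6, b) = (if b then 5 else 3)"
| "F3_blowup_colouring (X, b) = (if b then 6 else 5)"
| "F3_blowup_colouring (Y, b) = (if b then 3 else 1)"
| "F3_blowup_colouring (Z, b) = (if b then 4 else 2)"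

lemma blowup2_F3_7_colourable: "colourable (blowup2 F3_adj) 7"
  unfolding colourable_def proper_colouring_def
proof (intro exI[of _ F3_blowup_colouring] conjI allI impI)
  show "F3_blowup_colouring v < 7" for v
    by (cases v rule: F3_blowup_colouring.cases) auto
  show "F3_blowup_colouring u \<noteq> F3_blowup_colouring v" if "blowup2 F3_adj u v" for u v
    using that
    by (cases u rule: F3_blowup_colouring.cases; cases v rule: F3_blowup_colouring.cases)
       (simp_all add: blowup2_def F3_adj_def F3_edges_def)
qed

theorem lemma5p5:
  shows "chromatic_number (blowup2 F3_adj) = 7"
  using chromatic_number_eqI[of _ 6] blowup2_F3_7_colourable blowup2_F3_not_6_colourable
  by simp

end
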